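(* LCP-aware insertion sort, as described in the context, sorts any sequence of $n$ strings with common prefix length $\bar h$ and computes its LCP array $H$; it performs at most $L(H)+\frac{n(n-1)}{2}$ character comparisons and runs in $O(D+n^2)$ time.
   Context: Strings are zero-terminated finite sequences over a totally ordered alphabet, ordered lexicographically; $\mathrm{lcp}(s,t)$ is the length of their longest common prefix. For a sorted sequence $s_1\le\dots\le s_n$ its LCP array is $H=(\bot,h_2,\dots,h_n)$, $h_i=\mathrm{lcp}(s_{i-1},s_i)$, and $L(H)=\sum_{i\ge2}h_i$. $D$ is the distinguishing prefix size: the sum over the strings of the length of the shortest prefix not shared by any other string of the input ($D\ge L(H)$). LCP-aware insertion sort: for $j=1,\dots,n$ the string $x=s_j$ is inserted into the already sorted prefix $s_1,\dots,s_{j-1}$ (whose LCP array is maintained) by scanning positions from the right while shifting elements (and their LCP entries) one place to the right. The scan maintains $h'$, the known LCP of $x$ with the element $t$ immediately to its right in the final order so far (initially $h'=\bar h$, with no element to the right). At each step let $u$ be the next element to the left, with stored LCP $g=\mathrm{lcp}(u,t)$ ($t$ the element just passed). If there is no such $u$, insert $x$ at the front. If $g<h'$: $x>u$, so $x$ is inserted between $u$ and $t$, with LCP entries $\mathrm{lcp}(u,x)=g$ and $\mathrm{lcp}(x,t)=h'$. If $g>h'$: $x<u$ without character comparisons; $u$ is shifted right and the scan continues with $h'$ unchanged. If $g=h'$: characters of $x$ and $u$ are compared from position $h'+1$ on, increasing the common length $h''$ while they are equal and not the terminator; if then $x\ge u$, insert $x$ between $u$ and $t$ with LCP entries $h''$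 (to $u$) and the old $h'$ (to $t$); otherwise shift $u$ right and continue with $h':=h''$. Counting convention: each character comparison yielding equality counts one, and the final mismatch test together with the $\ge$ test counts one; no other comparisons are character comparisons. *)

theory Defs
  imports Main "HOL-Library.List_Lexorder" "HOL-Library.Option_ord"
begin

text \<open>A string is a list of characters over a linearly ordered alphabet 'a; the
 terminating zero is implicit. Character at (0-based) position k, with the
 terminator represented by None, which is smaller than every character
 (None < Some c, theory Option_ord).  The lexicographic order on strings is the
 library order of List_Lexorder (a proper prefix is smaller), which coincides
 with the order of zero-terminated strings.\<close>

definition chr :: "'a list \<Rightarrow> nat \<Rightarrow> 'a option" where
  "chr s k = (if k < length s then Some (s ! k) else None)"

definition term_str :: "'a list \<Rightarrow> 'a option list" where
  "term_str s = map Some s @ [None]"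

fun lcp :: "'a list \<Rightarrow> 'a list \<Rightarrow> nat" where
  "lcp (a # as) (b # bs) = (if a = b then Suc (lcp as bs) else 0)"
| "lcp _ _ = 0"

definition LH :: "'a list list \<Rightarrow> nat" where
  "LH A = (\<Sum>i\<in>{1..<length A}. lcp (A ! (i - 1)) (A ! i))"

text \<open>If the string occurs more than once no such prefix exists; then the whole
 terminated string (length + 1) is taken.\<close>
definition dist_prefix :: "'a list list \<Rightarrow> nat \<Rightarrow> nat" where
  "dist_prefix ss i = (LEAST k. k = length (ss ! i) + 1 \<or>
      (\<forall>j < length ss. j \<noteq> i \<longrightarrow>
          take k (term_str (ss ! i)) \<noteq> take k (term_str (ss ! j))))"

definition D :: "'a list list \<Rightarrow> nat" where
  "D ss = (\<Sum>i<length ss. dist_prefix ss i)"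

function ext :: "'a list \<Rightarrow> 'a list \<Rightarrow> nat \<Rightarrow> nat" where
  "ext x u k = (if chr x k = chr u k \<and> chr x k \<noteq> None then ext x u (Suc k) else k)"
  by pat_completeness auto
termination
  by (relation "measure (\<lambda>(x, u, k). length x - k)") (auto simp: chr_def split: if_splits)

text \<open>Stored LCP of A!(i-1) with the element t to its right (position i of the
 current sorted prefix A with LCP array H, where H!0 is a dummy). When there is no
 element to the right (i = length A) the stored value is the common prefix length
 hb, so that the first step always performs the character comparison.\<close>
definition gval :: "'a list list \<Rightarrow> nat list \<Rightarrow> nat \<Rightarrow> nat \<Rightarrow> nat" where
  "gval A H hb i = (if i = length A then hb else H ! i)"

text \<open>scan A H hb x i h': the scan is at the gap before position i (the element t
 just passed is A!i, if it exists), h' is the known LCP of x with t.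
 Result: (insertion position, LCP to left neighbour (dummy 0 at front),
 LCP to right neighbour, number of character comparisons, number of scan steps).\<close>
definition add_cost :: "nat \<Rightarrow> nat \<Rightarrow> nat \<times> nat \<times> nat \<times> nat \<times> nat
       \<Rightarrow> nat \<times> nat \<times> nat \<times> nat \<times> nat" where
  "add_cost c s r = (case r of (p, l, rr, c', s') \<Rightarrow> (p, l, rr, c' + c, s' + s))"

primrec scan :: "'a::linorder list list \<Rightarrow> nat list \<Rightarrow> nat \<Rightarrow> 'a list \<Rightarrow> nat \<Rightarrow> nat
             \<Rightarrow> nat \<times> nat \<times> nat \<times> nat \<times> nat" where
  "scan A H hb x 0 h' = (0, 0, h', 0, 1)"
| "scan A H hb x (Suc i) h' =
     (if gval A H hb (Suc i) < h' then (Suc i, gval A H hb (Suc i), h', 0, 1)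
      else if h' < gval A H hb (Suc i) then add_cost 0 1 (scan A H hb x i h')
      else if chr x (ext x (A ! i) h') \<ge> chr (A ! i) (ext x (A ! i) h')
      then (Suc i, ext x (A ! i) h', h', ext x (A ! i) h' - h' + 1, 1)
      else add_cost (ext x (A ! i) h' - h' + 1) 1 (scan A H hb x i (ext x (A ! i) h')))"

text \<open>Insert x into the sorted prefix (A, H); cost = character comparisons,
 time = comparisons + scan steps (each scan step, i.e. each shifted/inspected
 element, costs one unit) + one unit per insertion.\<close>
definition insert_step :: "nat \<Rightarrow> 'a::linorder list
       \<Rightarrow> 'a list list \<times> nat list \<times> nat \<times> nat \<Rightarrow> 'a list list \<times> nat list \<times> nat \<times> nat" where
  "insert_step hb x st = (case st of (A, H, c, t) \<Rightarrow>
     (case scan A H hb x (length A) hb of (p, l, r, c', s) \<Rightarrow>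
       (take p A @ [x] @ drop p A,
        (if p = length A then H @ [l] else take p H @ [l, r] @ drop (Suc p) H),
        c + c',
        t + c' + s + 1)))"

text \<open>Runs insertion sort for j = 1..n; returns the sorted sequence, its LCP
 array (None = bottom at the first position), the number of character comparisons
 and the running time.\<close>
definition lcp_isort :: "nat \<Rightarrow> 'a::linorder list list
       \<Rightarrow> 'a list list \<times> nat option list \<times> nat \<times> nat" where
  "lcp_isort hb ss = (case fold (insert_step hb) ss ([], [], 0, 0) of (A, H, c, t) \<Rightarrow>
      (A, (case H of [] \<Rightarrow> [] | _ # H' \<Rightarrow> None # map Some H'), c, t))"

end

theory Submission
  imports Defs "HOL-Combinatorics.List_Permutation"
begin

(* The scan inserting x into the sorted prefix A compares the stored LCP g of the next element u
   with the element t just passed against the known LCP h' of x with t.  For u \<le> t and x \<le> t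
   the identity lcp a c = min (lcp a b) (lcp b c) for sorted a \<le> b \<le> c decides x versus u without
   character comparisons whenever g \<noteq> h'; when g = h' the characters of x and u are compared from
   position h' on.  Every comparison returning equality raises the known LCP of x, so the
   comparisons of one insertion are bounded by the number of inspected elements plus the
   increase of L(H) caused by the insertion.

   Finally L(H) \<le> D (LH_sort_le_D) turns
   the time bound into O(D + n\<^sup>2); the main theorem combines lcp_isort_correct and lcp_isort_time. *)

(* The defining equation of ext unfolds forever under the simplifier; it is used by explicit substitution. *)
declare ext.simps[simp del]

lemma lcp_commute: "lcp a b = lcp b a"
  by (induction a b rule: lcp.induct) auto

lemma lcp_le_length: "lcp a b \<le> length a"
  by (induction a b rule: lcp.induct) auto

lemma chr_simps [simp]:
  "chr (y # ys) (Suc k) = chr ys k" "chr (y # ys) 0 = Some y" "chr [] k = None"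
  by (auto simp: chr_def)

lemma chr_below_lcp: "j < lcp a b \<Longrightarrow> chr a j = chr b j \<and> chr a j \<noteq> None"
proof (induction a b arbitrary: j rule: lcp.induct)
  case (1 a as b bs)
  then have "a = b" by (simp split: if_splits)
  show ?case
  proof (cases j)
    case (Suc j')
    then have "j' < lcp as bs" using "1.prems" \<open>a = b\<close> by simp
    then show ?thesis using "1.IH"[OF \<open>a = b\<close>] unfolding Suc chr_simps(1) by blast
  qed (simp add: \<open>a = b\<close>)
qed auto

lemma chr_at_lcp: "chr a (lcp a b) \<noteq> chr b (lcp a b) \<or> chr a (lcp a b) = None"
  by (induction a b rule: lcp.induct) auto

lemma lcp_greatest:
  "(\<And>j. j < k \<Longrightarrow> chr a j = chr b j \<and> chr a j \<noteq> None) \<Longrightarrow> k \<le> lcp a b"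
proof (induction a b arbitrary: k rule: lcp.induct)
  case (1 a as b bs)
  show ?case
  proof (cases k)
    case (Suc k')
    have "a = b" using "1.prems"[of 0] Suc by simp
    moreover have "k' \<le> lcp as bs"
      using "1.IH"[OF \<open>a = b\<close>, of k'] "1.prems"[of "Suc _"] Suc by (metis Suc_mono chr_simps(1))
    ultimately show ?thesis using Suc by simp
  qed simp
qed (use less_Suc_eq_0_disj in \<open>fastforce+\<close>)

lemma lcp_ultrametric: "min (lcp a b) (lcp b c) \<le> lcp a c"
  by (rule lcp_greatest) (metis chr_below_lcp min_less_iff_conj)

lemma less_iff_chr_at_lcp:
  fixes a b :: "'a::linorder list"
  shows "a < b \<longleftrightarrow> chr a (lcp a b) < chr b (lcp a b)"
proof (induction a b rule: lcp.induct)
  case ("2_1" bs) thus ?case by (cases bs) simp_all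
next
  case ("2_2" as) thus ?case by (cases as) simp_all
qed auto

lemma lcp_between_le:
  fixes a b c :: "'a::linorder list"
  assumes "a \<le> b" "b \<le> c"
  shows "lcp a c \<le> lcp a b \<and> lcp a c \<le> lcp b c"
  using assms
proof (induction a arbitrary: b c)
  case (Cons x xs)
  then show ?case
    by (cases b; cases c) (auto simp: less_le_not_le intro: order.antisym)
qed simp

lemma lcp_between:
  fixes a b c :: "'a::linorder list"
  assumes "a \<le> b" "b \<le> c"
  shows "lcp a c = min (lcp a b) (lcp b c)"
  using lcp_between_le[OF assms] lcp_ultrametric[of a b c] by (intro order.antisym) auto

lemma ext_eq_lcp: "k \<le> lcp x u \<Longrightarrow> ext x u k = lcp x u"
proof (induction x u k rule: ext.induct)
  case (1 x u k)
  show ?case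
  proof (cases "k = lcp x u")
    case True
    then show ?thesis using chr_at_lcp[of x u] by (subst ext.simps) auto
  next
    case False
    then have "k < lcp x u" using "1.prems" by simp
    then have agree: "chr x k = chr u k \<and> chr x k \<noteq> None" by (rule chr_below_lcp)
    then have "ext x u k = ext x u (Suc k)" by (subst ext.simps) (rule if_P)
    also have "\<dots> = lcp x u" using "1.IH"[OF agree] \<open>k < lcp x u\<close> by simp
    finally show ?thesis .
  qed
qed

lemma neighbour_lcp_less:
  fixes u x t :: "'a::linorder list"
  assumes "u \<le> t" "x \<le> t" "lcp u t < lcp x t"
  shows "u < x \<and> lcp u x = lcp u t"
proof -
  have "u < x"
  proof (rule ccontr)
    assume "\<not> u < x"
    then have "lcp x t = min (lcp x u) (lcp u t)" using lcp_between[of x u t] assms by simp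
    then show False using assms(3) by simp
  qed
  moreover have "lcp u t = min (lcp u x) (lcp x t)" using lcp_between[of u x t] calculation assms by simp
  ultimately show ?thesis using assms(3) by simp
qed

lemma neighbour_lcp_greater:
  fixes u x t :: "'a::linorder list"
  assumes "u \<le> t" "x \<le> t" "lcp x t < lcp u t"
  shows "x < u \<and> lcp x u = lcp x t"
proof -
  have "x < u"
  proof (rule ccontr)
    assume "\<not> x < u"
    then have "lcp u t = min (lcp u x) (lcp x t)" using lcp_between[of u x t] assms by simp
    then show False using assms(3) by simp
  qed
  moreover have "lcp x t = min (lcp x u) (lcp u t)" using lcp_between[of x u t] calculation assms by simp
  ultimately show ?thesis using assms(3) by simp
qed

definition lcp_array :: "'a list list \<Rightarrow> nat list \<Rightarrow> bool" where
  "lcp_array A H \<longleftrightarrow> length H = length A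
     \<and> (\<forall>k. 0 < k \<and> k < length A \<longrightarrow> H ! k = lcp (A ! (k - 1)) (A ! k))"

(* Specification of a scan that started at gap i with known LCP h to the right neighbour:
   the insertion position p, the two new LCP entries l and r, the number c of character
   comparisons, which is bounded by the number of inspected elements plus the gain in known
   LCP length, and the number s of scan steps. *)
definition scan_result :: "'a::linorder list list \<Rightarrow> nat \<Rightarrow> 'a list \<Rightarrow> nat \<Rightarrow> nat
      \<Rightarrow> nat \<times> nat \<times> nat \<times> nat \<times> nat \<Rightarrow> bool" where
  "scan_result A hb x i h res \<longleftrightarrow> (case res of (p, l, r, c, s) \<Rightarrow>
      p \<le> i \<and> (\<forall>k<p. A ! k \<le> x) \<and> (\<forall>k. p \<le> k \<and> k < length A \<longrightarrow> x < A ! k)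
    \<and> l = (if p = 0 then 0 else lcp (A ! (p - 1)) x)
    \<and> r = (if p = length A then hb else lcp x (A ! p))
    \<and> c + h \<le> i + max l r \<and> s \<le> i + 1)"

lemma scan_result_stop:
  fixes A :: "'a::linorder list list"
  assumes "sorted A" "i < length A" "A ! i \<le> x"
    and "\<forall>k. Suc i \<le> k \<and> k < length A \<longrightarrow> x < A ! k"
    and "h = (if Suc i = length A then hb else lcp x (A ! Suc i))"
    and "l = lcp (A ! i) x" "c + h \<le> Suc i + max l h"
  shows "scan_result A hb x (Suc i) h (Suc i, l, h, c, 1)"
proof -
  have "A ! k \<le> x" if "k < Suc i" for k
    using sorted_nth_mono[OF assms(1), of k i] that assms(2,3) by simp
  then show ?thesis using assms(2-) unfolding scan_result_def by auto
qed

(* Moving one element further left preserves the specification, provided the comparisons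
   spent in this step are paid by the increase of the known LCP. *)
lemma scan_result_shift:
  assumes "scan_result A hb x i h' R" "h + c \<le> h' + 1"
  shows "scan_result A hb x (Suc i) h (add_cost c 1 R)"
  using assms by (cases R) (auto simp: scan_result_def add_cost_def)

lemma scan_correct:
  fixes A :: "'a::linorder list list"
  assumes sorted: "sorted A"
    and lcps: "lcp_array A H"
    and common: "\<forall>a\<in>set A. hb \<le> lcp x a"
  shows "i \<le> length A \<Longrightarrow> \<forall>k. i \<le> k \<and> k < length A \<longrightarrow> x < A ! k
    \<Longrightarrow> h = (if i = length A then hb else lcp x (A ! i))
    \<Longrightarrow> scan_result A hb x i h (scan A H hb x i h)"
proof (induction i arbitrary: h)
  case 0
  then show ?case by (auto simp: scan_result_def)
next
  case (Suc i)
  define u where "u = A ! i"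
  define g where "g = gval A H hb (Suc i)"
  have i: "i < length A" using Suc.prems(1) by simp
  have right: "\<forall>k. Suc i \<le> k \<and> k < length A \<longrightarrow> x < A ! k" using Suc.prems(2) by simp
  have right_from_i: "\<forall>k. i \<le> k \<and> k < length A \<longrightarrow> x < A ! k" if "x < u"
    using that right unfolding u_def by (metis Suc_le_eq le_eq_less_or_eq)
  have g: "g = (if Suc i = length A then hb else lcp u (A ! Suc i))"
    using lcps i by (simp add: g_def gval_def u_def lcp_array_def)
  have neighbours: "u \<le> A ! Suc i \<and> x \<le> A ! Suc i" if "Suc i < length A"
    using sorted_nth_mono[OF sorted, of i "Suc i"] right that by (simp add: u_def less_imp_le)
  consider (less) "g < h" | (greater) "h < g" | (equal) "g = h" by linarith
  then show ?case
  proof cases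
    case less
    then have top: "Suc i < length A" using g Suc.prems(1,3) by (auto split: if_splits)
    then have "u < x \<and> lcp u x = g" using neighbour_lcp_less neighbours Suc.prems(3) g less by auto
    then have "scan_result A hb x (Suc i) h (Suc i, g, h, 0, 1)"
      by (intro scan_result_stop[OF sorted i _ right Suc.prems(3)]) (auto simp: u_def)
    moreover have "scan A H hb x (Suc i) h = (Suc i, g, h, 0, 1)" using less by (simp add: g_def)
    ultimately show ?thesis by simp
  next
    case greater
    then have top: "Suc i < length A" using g Suc.prems(1,3) by (auto split: if_splits)
    then have "x < u \<and> lcp x u = h" using neighbour_lcp_greater neighbours Suc.prems(3) g greater by auto
    then have "scan_result A hb x i h (scan A H hb x i h)"
      using Suc.IH[OF _ right_from_i] i by (simp add: u_def)
    then have "scan_result A hb x (Suc i) h (add_cost 0 1 (scan A H hb x i h))"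
      by (rule scan_result_shift) simp
    moreover have "scan A H hb x (Suc i) h = add_cost 0 1 (scan A H hb x i h)"
      using greater by (simp add: g_def)
    ultimately show ?thesis by (simp only:)
  next
    case equal
    have h_le: "h \<le> lcp x u"
    proof (cases "Suc i = length A")
      case True then show ?thesis using common Suc.prems(3) i by (simp add: u_def)
    next
      case False
      then show ?thesis using lcp_ultrametric[of x "A ! Suc i" u] lcp_commute[of u] equal g Suc.prems(3)
        by simp
    qed
    define e where "e = ext x u h"
    have e: "e = lcp x u" using ext_eq_lcp[OF h_le] by (simp add: e_def)
    show ?thesis
    proof (cases "chr u e \<le> chr x e")
      case True
      then have "u \<le> x" using less_iff_chr_at_lcp[of x u] e by (auto simp: not_less[symmetric])
      then have "scan_result A hb x (Suc i) h (Suc i, e, h, e - h + 1, 1)"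
        using h_le e lcp_commute[of x u]
        by (intro scan_result_stop[OF sorted i _ right Suc.prems(3)]) (auto simp: u_def)
      moreover have "scan A H hb x (Suc i) h = (Suc i, e, h, e - h + 1, 1)"
        using True equal by (simp add: g_def e_def u_def)
      ultimately show ?thesis by simp
    next
      case False
      then have "x < u" using less_iff_chr_at_lcp[of x u] e by auto
      then have "scan_result A hb x i e (scan A H hb x i e)"
        using Suc.IH[OF _ right_from_i] i e by (simp add: u_def)
      then have "scan_result A hb x (Suc i) h (add_cost (e - h + 1) 1 (scan A H hb x i e))"
        by (rule scan_result_shift) (use h_le e in simp)
      moreover have "scan A H hb x (Suc i) h = add_cost (e - h + 1) 1 (scan A H hb x i e)"
        using False equal by (simp add: g_def e_def u_def)
      ultimately show ?thesis by (simp only:)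
    qed
  qed
qed

(* L(H) as a recursive sum over neighbouring pairs, which is easier to update under insertion. *)
fun lcp_sum :: "'a list list \<Rightarrow> nat" where
  "lcp_sum (a # b # xs) = lcp a b + lcp_sum (b # xs)"
| "lcp_sum _ = 0"

lemma LH_Cons_Cons: "LH (a # b # xs) = lcp a b + LH (b # xs)"
proof -
  let ?f = "\<lambda>ys i. lcp (ys ! (i - 1)) (ys ! i)"
  have "LH (a # b # xs) = lcp a b + (\<Sum>i\<in>{Suc 1..<Suc (Suc (length xs))}. ?f (a # b # xs) i)"
    unfolding LH_def by (subst sum.atLeast_Suc_lessThan) simp_all
  also have "(\<Sum>i\<in>{Suc 1..<Suc (Suc (length xs))}. ?f (a # b # xs) i)
      = (\<Sum>i\<in>{1..<Suc (length xs)}. ?f (a # b # xs) (Suc i))"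
    by (rule sum.shift_bounds_Suc_ivl)
  also have "\<dots> = LH (b # xs)"
    unfolding LH_def by (rule sum.cong) (auto simp: nth_Cons')
  finally show ?thesis .
qed

lemma LH_eq_lcp_sum: "LH A = lcp_sum A"
  by (induction A rule: lcp_sum.induct) (simp_all add: LH_Cons_Cons, simp_all add: LH_def)

lemma lcp_sum_split: "lcp_sum (xs @ y # ys) = lcp_sum (xs @ [y]) + lcp_sum (y # ys)"
  by (induction xs rule: lcp_sum.induct) auto

lemma lcp_sum_snoc: "lcp_sum (xs @ [y]) = lcp_sum xs + (if xs = [] then 0 else lcp (last xs) y)"
  by (induction xs rule: lcp_sum.induct) auto

lemma lcp_sum_Cons: "lcp_sum (y # ys) = lcp_sum ys + (if ys = [] then 0 else lcp y (hd ys))"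
  by (cases ys) auto

lemma lcp_sum_insert_at:
  assumes "p \<le> length A"
  shows "lcp_sum (take p A @ x # drop p A) + (if 0 < p \<and> p < length A then lcp (A ! (p - 1)) (A ! p) else 0)
     = lcp_sum A + (if 0 < p then lcp (A ! (p - 1)) x else 0) + (if p < length A then lcp x (A ! p) else 0)"
proof -
  define T R where "T = take p A" and "R = drop p A"
  have A: "A = T @ R" by (simp add: T_def R_def)
  have last_T: "0 < p \<Longrightarrow> last T = A ! (p - 1)"
    unfolding T_def by (subst last_conv_nth) (use assms in \<open>auto simp: min_def\<close>)
  have ends: "T \<noteq> [] \<longleftrightarrow> 0 < p" "R \<noteq> [] \<longleftrightarrow> p < length A" "p < length A \<Longrightarrow> hd R = A ! p"
    using assms by (auto simp: T_def R_def hd_drop_conv_nth)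
  have "lcp_sum (T @ R) = lcp_sum T + lcp_sum R
      + (if T \<noteq> [] \<and> R \<noteq> [] then lcp (last T) (hd R) else 0)"
    by (cases R) (simp_all add: lcp_sum_split[of T] lcp_sum_snoc lcp_sum_Cons)
  then show ?thesis
    using ends last_T unfolding T_def[symmetric] R_def[symmetric] A[symmetric]
    by (cases "0 < p"; cases "p < length A") (simp_all add: lcp_sum_split[of T] lcp_sum_snoc lcp_sum_Cons)
qed

lemma nth_insert_at:
  assumes "p \<le> length A" "k \<le> length A"
  shows "(take p A @ x # drop p A) ! k = (if k < p then A ! k else if k = p then x else A ! (k - 1))"
  using assms by (auto simp: nth_append min_def nth_Cons')

lemma sorted_insert_at:
  fixes A :: "'a::linorder list"
  assumes "sorted A" "\<forall>k<p. A ! k \<le> x" "\<forall>k. p \<le> k \<and> k < length A \<longrightarrow> x < A ! k"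
  shows "sorted (take p A @ x # drop p A)"
proof -
  have "sorted (take p A) \<and> sorted (drop p A)
      \<and> (\<forall>a\<in>set (take p A). \<forall>b\<in>set (drop p A). a \<le> b)"
    using sorted_append[of "take p A" "drop p A"] assms(1) by simp
  moreover have "\<forall>a\<in>set (take p A). a \<le> x" "\<forall>a\<in>set (drop p A). x \<le> a"
    using assms(2,3) by (auto simp: in_set_conv_nth less_imp_le)
  ultimately show ?thesis by (auto simp: sorted_append)
qed

lemma lcp_array_insert_at:
  assumes "lcp_array A H" "p \<le> length A"
    and "0 < p \<Longrightarrow> l = lcp (A ! (p - 1)) x" "p < length A \<Longrightarrow> r = lcp x (A ! p)"
  shows "lcp_array (take p A @ x # drop p A)
           (if p = length A then H @ [l] else take p H @ [l, r] @ drop (Suc p) H)"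
proof -
  define H0 where "H0 = (if p = length A then H else H[p := r])"
  have H': "(if p = length A then H @ [l] else take p H @ [l, r] @ drop (Suc p) H)
      = take p H0 @ l # drop p H0"
    using assms(1,2) by (auto simp: H0_def lcp_array_def upd_conv_take_nth_drop)
  have len: "length H0 = length A" "length H = length A"
    using assms(1) by (simp_all add: H0_def lcp_array_def)
  have old: "H ! k = lcp (A ! (k - 1)) (A ! k)" if "0 < k" "k < length A" for k
    using assms(1) that by (simp add: lcp_array_def)
  show ?thesis unfolding lcp_array_def H'
  proof (intro conjI allI impI)
    show "length (take p H0 @ l # drop p H0) = length (take p A @ x # drop p A)"
      using len by simp
    fix k assume k: "0 < k \<and> k < length (take p A @ x # drop p A)"
    then have "k \<le> length A" "k - 1 \<le> length A" using assms(2) by auto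
    note nth = nth_insert_at[OF assms(2) this(1)] nth_insert_at[OF assms(2) this(2)]
      nth_insert_at[of p H0 k l, unfolded len, OF assms(2) this(1)]
    consider "k < p" | "k = p" | "k = Suc p" | "Suc p < k" by linarith
    then show "(take p H0 @ l # drop p H0) ! k
        = lcp ((take p A @ x # drop p A) ! (k - 1)) ((take p A @ x # drop p A) ! k)"
      by cases (use k nth assms(2-4) old len in \<open>auto simp: H0_def nth_list_update\<close>)
  qed
qed

(* The LCP information gained by one scan is paid for by the growth of L(H):
   the larger of the two new LCP entries is bounded by the increase of the neighbour sum plus hb. *)
lemma lcp_sum_insert_gain:
  fixes A :: "'a::linorder list list"
  assumes "p \<le> length A" "\<forall>k<p. A ! k \<le> x" "\<forall>k. p \<le> k \<and> k < length A \<longrightarrow> x < A ! k"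
    and "l = (if p = 0 then 0 else lcp (A ! (p - 1)) x)"
    and "r = (if p = length A then hb else lcp x (A ! p))"
  shows "lcp_sum A + max l r \<le> lcp_sum (take p A @ x # drop p A) + hb"
proof (cases "0 < p \<and> p < length A")
  case True
  then have "A ! (p - 1) \<le> x" "x \<le> A ! p" using assms(2,3) by auto
  then have "lcp (A ! (p - 1)) (A ! p) = min l r" using lcp_between True assms(4,5) by simp
  then show ?thesis using lcp_sum_insert_at[OF assms(1), of x] True assms(4,5) by simp
next
  case False
  then show ?thesis using lcp_sum_insert_at[OF assms(1), of x] assms(1,4,5) by auto
qed

(* Invariant after inserting the strings xs: the state is sorted, a permutation of xs,
   carries its LCP array, and the comparison count c and running time t are bounded
   (doubled to avoid division) by L(H) + n(n-1)/2 and c + n(n-1)/2 + 2n respectively. *)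
definition insertion_invariant :: "'a::linorder list list
      \<Rightarrow> 'a list list \<times> nat list \<times> nat \<times> nat \<Rightarrow> bool" where
  "insertion_invariant xs st \<longleftrightarrow> (case st of (A, H, c, t) \<Rightarrow>
      sorted A \<and> mset A = mset xs \<and> lcp_array A H
    \<and> 2 * c \<le> 2 * lcp_sum A + length A * (length A - 1)
    \<and> 2 * t \<le> 2 * c + length A * (length A - 1) + 4 * length A)"

lemma insert_step_invariant:
  fixes x :: "'a::linorder list"
  assumes inv: "insertion_invariant xs (A, H, c, t)" and common: "\<forall>a\<in>set A. hb \<le> lcp x a"
  shows "insertion_invariant (xs @ [x]) (insert_step hb x (A, H, c, t))"
proof -
  define n where "n = length A"
  have sorted: "sorted A" and lcps: "lcp_array A H"
    and c: "2 * c \<le> 2 * lcp_sum A + n * (n - 1)" and t: "2 * t \<le> 2 * c + n * (n - 1) + 4 * n"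
    using inv by (simp_all add: insertion_invariant_def n_def)
  obtain p l r c' s where scan: "scan A H hb x (length A) hb = (p, l, r, c', s)"
    by (cases "scan A H hb x (length A) hb")
  have "scan_result A hb x (length A) hb (scan A H hb x (length A) hb)"
    by (rule scan_correct[OF sorted lcps common]) auto
  then have p: "p \<le> n" and left: "\<forall>k<p. A ! k \<le> x"
    and right: "\<forall>k. p \<le> k \<and> k < n \<longrightarrow> x < A ! k"
    and l: "l = (if p = 0 then 0 else lcp (A ! (p - 1)) x)"
    and r: "r = (if p = n then hb else lcp x (A ! p))"
    and cost: "c' + hb \<le> n + max l r" and steps: "s \<le> n + 1"
    unfolding scan scan_result_def n_def prod.case by blast+
  define A' where "A' = take p A @ x # drop p A"
  have len: "length A' = Suc n" using p by (simp add: A'_def n_def)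
  have gain: "lcp_sum A + max l r \<le> lcp_sum A' + hb"
    unfolding A'_def by (rule lcp_sum_insert_gain) (use p left right l r in \<open>simp_all add: n_def\<close>)
  define Q Q' where "Q = n * (n - 1)" and "Q' = Suc n * (Suc n - 1)"
  have square: "Q + 2 * n = Q'" by (cases n) (simp_all add: Q_def Q'_def)
  have "sorted A'" unfolding A'_def using sorted_insert_at[OF sorted left] right by (simp add: n_def)
  moreover have "mset A' = mset (xs @ [x])"
    using inv arg_cong[OF append_take_drop_id[of p A], of mset]
    by (simp add: A'_def insertion_invariant_def del: append_take_drop_id)
  moreover have "lcp_array A' (if p = length A then H @ [l] else take p H @ [l, r] @ drop (Suc p) H)"
    unfolding A'_def by (rule lcp_array_insert_at[OF lcps]) (use p l r in \<open>simp_all add: n_def\<close>)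
  moreover have "2 * (c + c') \<le> 2 * lcp_sum A' + Q'"
    using c cost gain square unfolding Q_def[symmetric] distrib_left by linarith
  moreover have "2 * (t + c' + s + 1) \<le> 2 * (c + c') + Q' + 4 * n + 4"
    using t steps square unfolding Q_def[symmetric] distrib_left by linarith
  ultimately show ?thesis
    using scan len unfolding insert_step_def insertion_invariant_def A'_def Q'_def by simp
qed

lemma fold_insert_step_invariant:
  fixes xs :: "'a::linorder list list"
  assumes "\<forall>s\<in>set xs. \<forall>t\<in>set xs. hb \<le> lcp s t"
  shows "insertion_invariant xs (fold (insert_step hb) xs ([], [], 0, 0))"
  using assms
proof (induction xs rule: rev_induct)
  case Nil
  then show ?case by (simp add: insertion_invariant_def lcp_array_def)
next
  case (snoc x xs)
  obtain A H c t where state: "fold (insert_step hb) xs ([], [], 0, 0) = (A, H, c, t)"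
    by (cases "fold (insert_step hb) xs ([], [], 0, 0)")
  have inv: "insertion_invariant xs (A, H, c, t)" using snoc state by simp
  then have "mset A = mset xs" by (simp add: insertion_invariant_def)
  then have "set A = set xs" by (rule mset_eq_setD)
  then have "\<forall>a\<in>set A. hb \<le> lcp x a" using snoc.prems by simp
  then show ?case using insert_step_invariant[OF inv] state by simp
qed

lemma take_term_str_eq: "k \<le> lcp a b \<Longrightarrow> take k (term_str a) = take k (term_str b)"
proof (induction a b arbitrary: k rule: lcp.induct)
  case (1 a as b bs)
  then show ?case by (cases k) (auto simp: term_str_def split: if_splits)
qed (simp_all add: term_str_def)

lemma lcp_le_dist_prefix:
  assumes "i < length ss" "j < length ss" "j \<noteq> i"
  shows "lcp (ss ! j) (ss ! i) \<le> dist_prefix ss i"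
proof -
  define k where "k = dist_prefix ss i"
  have "k = length (ss ! i) + 1 \<or> (\<forall>j < length ss. j \<noteq> i \<longrightarrow>
          take k (term_str (ss ! i)) \<noteq> take k (term_str (ss ! j)))"
    unfolding k_def dist_prefix_def by (rule LeastI[of _ "length (ss ! i) + 1"]) simp
  then show ?thesis
  proof
    assume "k = length (ss ! i) + 1"
    then show ?thesis using lcp_le_length[of "ss ! i" "ss ! j"] lcp_commute[of "ss ! j"] k_def by simp
  next
    assume "\<forall>j < length ss. j \<noteq> i \<longrightarrow> take k (term_str (ss ! i)) \<noteq> take k (term_str (ss ! j))"
    then have "\<not> k \<le> lcp (ss ! i) (ss ! j)" using take_term_str_eq[of k "ss ! i" "ss ! j"] assms by blast
    then show ?thesis using lcp_commute[of "ss ! j"] k_def by simp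
  qed
qed

(* L(H) \<le> D: each neighbour LCP of the sorted order is charged to the distinguishing
   prefix of the right neighbour, via the bijection between sorted and input positions. *)
lemma LH_sort_le_D: "LH (sort ss) \<le> D ss"
proof -
  define n where "n = length ss"
  obtain f where f: "bij_betw f {..<n} {..<n}" and sorted: "\<And>i. i < n \<Longrightarrow> sort ss ! i = ss ! f i"
    using permutation_Ex_bij[of "sort ss" ss] by (auto simp: n_def)
  have "LH (sort ss) = (\<Sum>i\<in>{1..<n}. lcp (ss ! f (i - 1)) (ss ! f i))"
    unfolding LH_def length_sort n_def[symmetric] by (rule sum.cong) (auto simp: sorted)
  also have "\<dots> \<le> (\<Sum>i\<in>{1..<n}. dist_prefix ss (f i))"
  proof (rule sum_mono)
    fix i assume i: "i \<in> {1..<n}"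
    then have "f (i - 1) \<noteq> f i" "f i < n" "f (i - 1) < n"
      using bij_betw_imp_inj_on[OF f] bij_betwE[OF f] by (auto dest: inj_onD)
    then show "lcp (ss ! f (i - 1)) (ss ! f i) \<le> dist_prefix ss (f i)"
      by (intro lcp_le_dist_prefix) (simp_all add: n_def)
  qed
  also have "\<dots> \<le> (\<Sum>i<n. dist_prefix ss (f i))" by (rule sum_mono2) auto
  also have "\<dots> = D ss" unfolding D_def n_def[symmetric] by (rule sum.reindex_bij_betw[OF f])
  finally show ?thesis .
qed

lemma lcp_isort_invariant:
  fixes ss :: "'a::linorder list list"
  assumes "\<forall>s\<in>set ss. \<forall>t\<in>set ss. hb \<le> lcp s t"
  obtains A H c t where
    "lcp_isort hb ss = (A, case H of [] \<Rightarrow> [] | _ # H' \<Rightarrow> None # map Some H', c, t)"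
    "insertion_invariant ss (A, H, c, t)" "A = sort ss"
proof -
  obtain A H c t where state: "fold (insert_step hb) ss ([], [], 0, 0) = (A, H, c, t)"
    by (cases "fold (insert_step hb) ss ([], [], 0, 0)")
  then have inv: "insertion_invariant ss (A, H, c, t)"
    using fold_insert_step_invariant[OF assms] by simp
  then have "A = sort ss"
    by (intro properties_for_sort[symmetric]) (simp_all add: insertion_invariant_def)
  with inv state that show ?thesis by (simp add: lcp_isort_def)
qed

lemma lcp_isort_correct:
  fixes ss :: "'a::linorder list list"
  assumes "\<forall>s\<in>set ss. \<forall>t\<in>set ss. hb \<le> lcp s t"
  shows "case lcp_isort hb ss of (A, H, c, t) \<Rightarrow>
           A = sort ss
         \<and> length H = length ss
         \<and> (ss \<noteq> [] \<longrightarrow> H ! 0 = None)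
         \<and> (\<forall>i. 0 < i \<and> i < length ss \<longrightarrow> H ! i = Some (lcp (A ! (i - 1)) (A ! i)))
         \<and> c \<le> LH A + length ss * (length ss - 1) div 2"
proof -
  obtain A H c t where out: "lcp_isort hb ss = (A, case H of [] \<Rightarrow> [] | _ # H' \<Rightarrow> None # map Some H', c, t)"
    and inv: "insertion_invariant ss (A, H, c, t)" and A: "A = sort ss"
    using lcp_isort_invariant[OF assms] .
  then have len: "length A = length ss" by simp
  have lcps: "lcp_array A H" and c: "2 * c \<le> 2 * LH A + length ss * (length ss - 1)"
    using inv len by (simp_all add: insertion_invariant_def LH_eq_lcp_sum)
  have "c \<le> LH A + length ss * (length ss - 1) div 2" using c by presburger
  moreover have "H ! i = lcp (A ! (i - 1)) (A ! i)" if "0 < i" "i < length ss" for i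
    using lcps that len by (simp add: lcp_array_def)
  ultimately show ?thesis using out A lcps len
    by (cases H) (auto simp: lcp_array_def nth_Cons' split: nat.split)
qed

lemma lcp_isort_time:
  fixes ss :: "'a::linorder list list"
  assumes "\<forall>s\<in>set ss. \<forall>t\<in>set ss. hb \<le> lcp s t"
  shows "snd (snd (snd (lcp_isort hb ss))) \<le> 2 * (D ss + (length ss)\<^sup>2)"
proof -
  obtain A H c t where out: "lcp_isort hb ss = (A, case H of [] \<Rightarrow> [] | _ # H' \<Rightarrow> None # map Some H', c, t)"
    and inv: "insertion_invariant ss (A, H, c, t)" and A: "A = sort ss"
    using lcp_isort_invariant[OF assms] .
  define n Q where "n = length ss" and "Q = n * (n - 1)"
  have "2 * c \<le> 2 * LH A + Q" "2 * t \<le> 2 * c + Q + 4 * n"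
    using inv A by (simp_all add: insertion_invariant_def LH_eq_lcp_sum n_def Q_def)
  moreover have "LH A \<le> D ss" using LH_sort_le_D A by simp
  moreover have "Q + n = n\<^sup>2" "n \<le> n\<^sup>2"
    by (cases n) (simp_all add: Q_def power2_eq_square)
  ultimately show ?thesis using out unfolding n_def[symmetric] by simp
qed

theorem mainTheorem6:
  shows "(\<forall>(ss :: 'a::linorder list list) hb.
            (\<forall>s\<in>set ss. \<forall>t\<in>set ss. hb \<le> lcp s t) \<longrightarrow>
            (case lcp_isort hb ss of (A, H, c, t) \<Rightarrow>
               A = sort ss
             \<and> length H = length ss
             \<and> (ss \<noteq> [] \<longrightarrow> H ! 0 = None)
             \<and> (\<forall>i. 0 < i \<and> i < length ss \<longrightarrow> H ! i = Some (lcp (A ! (i - 1)) (A ! i)))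
             \<and> c \<le> LH A + length ss * (length ss - 1) div 2))
       \<and> (\<exists>C :: nat. \<forall>(ss :: 'a list list) hb.
            (\<forall>s\<in>set ss. \<forall>t\<in>set ss. hb \<le> lcp s t) \<longrightarrow>
            snd (snd (snd (lcp_isort hb ss))) \<le> C * (D ss + (length ss)\<^sup>2))"
  using lcp_isort_correct lcp_isort_time by blast

end
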